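(* On the two-letter alphabet $\{\mathtt A,\mathtt B\}$, there exists a $1$-regular word of length $n\ge 1$ if and only if $n=4k$ for some positive integer $k$. Moreover, in that case every $1$-regular word of length $4k$ over $\{\mathtt A,\mathtt B\}$ can be obtained from the word $\mathtt A^k\mathtt B^{2k}\mathtt A^k$ by a finite sequence of operations, each of which replaces a word of the form $x\,\mathtt{AB}\,y\,\mathtt{BA}\,z$ by $x\,\mathtt{BA}\,y\,\mathtt{AB}\,z$ (for some words $x,y,z$, possibly empty), with every intermediate word being $1$-regular.
   Context: For a word $u=u_1\cdots u_m$ over an alphabet $\mathcal A$ with $b$ letters and an integer $r\ge -1$, $u$ is $r$-regular if for every $k=0,1,\dots,r$ the sum $\sum_{1\le t\le m,\ u_t=c} t^k$ is the same for all letters $c\in\mathcal A$ (a letter not occurring contributes $0$). Here $\mathcal A=\{\mathtt A,\mathtt B\}$, and $\mathtt A^k$ denotes $k$ consecutive copies of $\mathtt A$. *)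

theory Defs
  imports Main
begin

datatype letter = A | B

definition pos_power_sum :: "nat \<Rightarrow> letter \<Rightarrow> letter list \<Rightarrow> nat" where
  "pos_power_sum k c u = (\<Sum>t\<in>{1..length u}. if u ! (t - 1) = c then t ^ k else 0)"

definition regular :: "int \<Rightarrow> letter list \<Rightarrow> bool" where
  "regular r u \<longleftrightarrow> (\<forall>k::nat. int k \<le> r \<longrightarrow>
      (\<forall>c d. pos_power_sum k c u = pos_power_sum k d u))"

definition swap_step :: "letter list \<Rightarrow> letter list \<Rightarrow> bool" where
  "swap_step u v \<longleftrightarrow> (\<exists>x y z. u = x @ [A, B] @ y @ [B, A] @ z \<and>
                                 v = x @ [B, A] @ y @ [A, B] @ z)"

definition regular_swap_step :: "letter list \<Rightarrow> letter list \<Rightarrow> bool" where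
  "regular_swap_step u v \<longleftrightarrow> swap_step u v \<and> regular 1 u \<and> regular 1 v"

end

theory Submission
  imports Defs
begin

text \<open>
  The A- and B-power sums of a word of length \<open>n\<close> add up to \<open>\<Sum>t = 1..n. t ^ k\<close>, so a word is
  1-regular iff it has \<open>n/2\<close> letters B whose positions sum to \<open>n(n+1)/4\<close>; this forces
  \<open>4 dvd n\<close>. A swap \<open>x AB y BA z \<mapsto> x BA y AB z\<close> preserves the number and the position sum
  of each letter, but strictly increases the sum of the squared positions of B. Undoing swaps
  therefore terminates, and it gets stuck only at regular words without a factor
  \<open>BA \<dots> AB\<close>, i.e. of the shape \<open>A^a B^b\<close> or \<open>A^a B^b A B^c A^d\<close> with \<open>b > 0\<close>. For these
  the position-sum equation leaves only \<open>A^k B^(2k) A^k\<close>.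
\<close>

lemma pos_power_sum_Nil [simp]: "pos_power_sum k c [] = 0"
  by (simp add: pos_power_sum_def)

lemma pos_power_sum_snoc:
  "pos_power_sum k c (xs @ [d]) =
     pos_power_sum k c xs + (if d = c then Suc (length xs) ^ k else 0)"
proof -
  have "(\<Sum>t\<in>{1..length xs}. if (xs @ [d]) ! (t - 1) = c then t ^ k else 0) =
        (\<Sum>t\<in>{1..length xs}. if xs ! (t - 1) = c then t ^ k else 0)"
    by (rule sum.cong) (auto simp: nth_append)
  moreover have "{1..Suc (length xs)} = insert (Suc (length xs)) {1..length xs}"
    by auto
  ultimately show ?thesis
    by (simp add: pos_power_sum_def)
qed

lemma pos_power_sum_append:
  "pos_power_sum k c (xs @ ys) =
     pos_power_sum k c xs + (\<Sum>j\<le>k. (k choose j) * length xs ^ (k - j) * pos_power_sum j c ys)"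
proof (induction ys rule: rev_induct)
  case (snoc d ys)
  have "(\<Sum>j\<le>k. (k choose j) * length xs ^ (k - j) * Suc (length ys) ^ j) =
        (length xs + Suc (length ys)) ^ k"
    using binomial_ring[of "Suc (length ys)" "length xs" k] by (simp add: ac_simps)
  with snoc.IH show ?case
    by (cases "d = c")
       (simp_all add: pos_power_sum_snoc append_assoc[symmetric] sum.distrib algebra_simps
         del: append_assoc)
qed simp

lemma pos_power_sum_append_0:
  "pos_power_sum 0 c (xs @ ys) = pos_power_sum 0 c xs + pos_power_sum 0 c ys"
  using pos_power_sum_append[of 0] by simp

lemma pos_power_sum_append_1:
  "pos_power_sum 1 c (xs @ ys) =
     pos_power_sum 1 c xs + pos_power_sum 1 c ys + length xs * pos_power_sum 0 c ys"
  using pos_power_sum_append[of 1] by simp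

lemma pos_power_sum_append_2:
  "pos_power_sum 2 c (xs @ ys) =
     pos_power_sum 2 c xs + pos_power_sum 2 c ys + 2 * length xs * pos_power_sum 1 c ys
     + length xs ^ 2 * pos_power_sum 0 c ys"
  using pos_power_sum_append[of 2] by (simp add: numeral_2_eq_2 algebra_simps)

lemma pos_power_sum_Cons:
  "pos_power_sum k c (d # xs) =
     (if d = c then 1 else 0) + (\<Sum>j\<le>k. (k choose j) * pos_power_sum j c xs)"
  using pos_power_sum_append[of k c "[d]" xs] pos_power_sum_snoc[of k c "[]" d] by simp

lemma pos_power_sum_Cons_0_1_2:
  "pos_power_sum 0 c (d # xs) = (if d = c then 1 else 0) + pos_power_sum 0 c xs"
  "pos_power_sum 1 c (d # xs) =
     (if d = c then 1 else 0) + pos_power_sum 1 c xs + pos_power_sum 0 c xs"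
  "pos_power_sum 2 c (d # xs) =
     (if d = c then 1 else 0) + pos_power_sum 2 c xs + 2 * pos_power_sum 1 c xs
     + pos_power_sum 0 c xs"
  by (simp_all add: pos_power_sum_Cons numeral_2_eq_2)

lemma pos_power_sum_replicate:
  "pos_power_sum k c (replicate m d) = (if d = c then \<Sum>t = 1..m. t ^ k else 0)"
  unfolding pos_power_sum_def by (auto intro!: sum.neutral sum.cong)

lemma pos_power_sum_replicate_other:
  "d \<noteq> c \<Longrightarrow> pos_power_sum k c (replicate m d) = 0"
  by (simp add: pos_power_sum_replicate)

lemma pos_power_sum_0_replicate:
  "pos_power_sum 0 c (replicate m c) = m"
  by (simp add: pos_power_sum_replicate)

lemma double_pos_power_sum_1_replicate:
  "2 * pos_power_sum 1 c (replicate m c) = m * (m + 1)"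
  using double_gauss_sum_from_Suc_0[of m, where ?'a = nat]
  by (simp add: pos_power_sum_replicate)

lemma pos_power_sum_A_plus_B:
  "pos_power_sum k A w + pos_power_sum k B w = (\<Sum>t = 1..length w. t ^ k)"
  unfolding pos_power_sum_def sum.distrib[symmetric]
  by (rule sum.cong) (auto intro: letter.exhaust)

lemma regular_1_iff:
  "regular 1 w \<longleftrightarrow>
     pos_power_sum 0 A w = pos_power_sum 0 B w \<and> pos_power_sum 1 A w = pos_power_sum 1 B w"
proof -
  have "(\<forall>k::nat. int k \<le> 1 \<longrightarrow> P k) \<longleftrightarrow> P 0 \<and> P 1" for P
  proof -
    have "int k \<le> 1 \<longleftrightarrow> k = 0 \<or> k = 1" for k
      by auto
    then show ?thesis
      by auto
  qed
  moreover have "(\<forall>c d. f c = f d) \<longleftrightarrow> f A = f B" for f :: "letter \<Rightarrow> nat"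
    by (metis (full_types) letter.exhaust)
  ultimately show ?thesis
    unfolding regular_def by simp
qed

lemma regular_1_iff_B_sums:
  "regular 1 w \<longleftrightarrow>
     2 * pos_power_sum 0 B w = length w \<and> 4 * pos_power_sum 1 B w = length w * (length w + 1)"
proof -
  have "pos_power_sum 0 A w + pos_power_sum 0 B w = length w"
    using pos_power_sum_A_plus_B[of 0 w] by simp
  moreover have "2 * (pos_power_sum 1 A w + pos_power_sum 1 B w) = length w * (length w + 1)"
    using pos_power_sum_A_plus_B[of 1 w] double_gauss_sum_from_Suc_0[of "length w", where ?'a = nat]
    by simp
  ultimately show ?thesis
    unfolding regular_1_iff by arith
qed

text \<open>
  The simplifier rewrites the exponent \<open>1 :: nat\<close> to \<open>Suc 0\<close>, which would block the rules
  for \<open>pos_power_sum 1\<close>; hence the \<open>simp only\<close> and \<open>del: One_nat_def\<close> calls below.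
\<close>

lemma swap_step_pos_power_sum_eq:
  assumes "swap_step u v" and "j \<le> 1"
  shows "pos_power_sum j c u = pos_power_sum j c v"
proof -
  from assms(1) obtain x y z where "u = x @ [A, B] @ y @ [B, A] @ z" "v = x @ [B, A] @ y @ [A, B] @ z"
    unfolding swap_step_def by blast
  moreover have "j = 0 \<or> j = 1"
    using assms(2) by auto
  ultimately show ?thesis
    by (auto simp only: pos_power_sum_append_0 pos_power_sum_append_1 pos_power_sum_Cons_0_1_2
        append_Cons append_Nil) simp_all
qed

lemma swap_step_pos_power_sum_2_B_less:
  assumes "swap_step u v"
  shows "pos_power_sum 2 B u < pos_power_sum 2 B v"
proof -
  from assms obtain x y z where "u = x @ [A, B] @ y @ [B, A] @ z" "v = x @ [B, A] @ y @ [A, B] @ z"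
    unfolding swap_step_def by blast
  then show ?thesis
    by (simp only: pos_power_sum_append_0 pos_power_sum_append_1 pos_power_sum_append_2
        pos_power_sum_Cons_0_1_2 append_Cons append_Nil length_Cons) (simp add: algebra_simps)
qed

lemma swap_step_regular_1_iff:
  "swap_step u v \<Longrightarrow> regular 1 u \<longleftrightarrow> regular 1 v"
  unfolding regular_1_iff by (simp add: swap_step_pos_power_sum_eq[of u v])

lemma two_letter_word_without_factor:
  fixes d e :: letter
  assumes "d \<noteq> e" and "\<not> (\<exists>x z. w = x @ [d, e] @ z)"
  shows "\<exists>a b. w = replicate a e @ replicate b d"
  using assms(2)
proof (induction w)
  case Nil
  have "[] = replicate 0 e @ replicate 0 d"
    by simp
  then show ?case
    by blast
next
  case (Cons f w)
  have "\<not> (\<exists>x z. w = x @ [d, e] @ z)"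
  proof
    assume "\<exists>x z. w = x @ [d, e] @ z"
    then obtain x z where "w = x @ [d, e] @ z"
      by blast
    then have "f # w = (f # x) @ [d, e] @ z"
      by simp
    with Cons.prems show False
      by blast
  qed
  with Cons.IH obtain a b where w: "w = replicate a e @ replicate b d"
    by blast
  consider "f = e" | "f = d" "a = 0" | a' where "f = d" "a = Suc a'"
    using assms(1) by (cases a; cases f; cases d; cases e) auto
  then show ?case
  proof cases
    case 1
    then have "f # w = replicate (Suc a) e @ replicate b d"
      using w by simp
    then show ?thesis
      by blast
  next
    case 2
    then have "f # w = replicate 0 e @ replicate (Suc b) d"
      using w by simp
    then show ?thesis
      by blast
  next
    case (3 a')
    then have "f # w = [] @ [d, e] @ replicate a' e @ replicate b d"
      using w by simp
    with Cons.prems show ?thesis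
      by blast
  qed
qed

lemma first_occurrence_of_factor:
  assumes "p \<noteq> []" and "\<exists>x z. w = x @ p @ z"
  shows "\<exists>x z. w = x @ p @ z \<and> \<not> (\<exists>x' z'. x = x' @ p @ z')"
proof -
  obtain x where "\<exists>z. w = x @ p @ z"
    and least: "\<And>x''. \<exists>z''. w = x'' @ p @ z'' \<Longrightarrow> length x \<le> length x''"
    using ex_has_least_nat[where P = "\<lambda>x. \<exists>z. w = x @ p @ z" and m = length] assms(2)
    by blast
  then obtain z where xz: "w = x @ p @ z"
    by blast
  have "\<not> (\<exists>x' z'. x = x' @ p @ z')"
  proof
    assume "\<exists>x' z'. x = x' @ p @ z'"
    then obtain x' z' where "x = x' @ p @ z'"
      by blast
    with xz have "length x \<le> length x'"
      by (intro least) (metis append.assoc)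
    with \<open>x = x' @ p @ z'\<close> assms(1) show False
      by simp
  qed
  with xz show ?thesis
    by blast
qed

lemma word_without_BA_AB_pattern:
  assumes "\<not> (\<exists>x y z. w = x @ [B, A] @ y @ [A, B] @ z)"
  shows "(\<exists>a b. w = replicate a A @ replicate b B) \<or>
    (\<exists>a b c d. w = replicate a A @ replicate (Suc b) B @ A # replicate c B @ replicate d A)"
proof (cases "\<exists>x z. w = x @ [B, A] @ z")
  case False
  then show ?thesis
    using two_letter_word_without_factor[of B A] by blast
next
  case True
  then obtain x z where w: "w = x @ [B, A] @ z" and "\<not> (\<exists>x' z'. x = x' @ [B, A] @ z')"
    using first_occurrence_of_factor[of "[B, A]"] by blast
  then obtain a b where x: "x = replicate a A @ replicate b B"
    using two_letter_word_without_factor[of B A] by blast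
  have "\<not> (\<exists>y z'. z = y @ [A, B] @ z')"
  proof
    assume "\<exists>y z'. z = y @ [A, B] @ z'"
    then obtain y z' where "z = y @ [A, B] @ z'"
      by blast
    with w have "w = x @ [B, A] @ y @ [A, B] @ z'"
      by simp
    with assms show False
      by blast
  qed
  then obtain c d where z: "z = replicate c B @ replicate d A"
    using two_letter_word_without_factor[of A B] by blast
  have "w = replicate a A @ replicate (Suc b) B @ A # replicate c B @ replicate d A"
    using w x z by (simp add: replicate_app_Cons_same)
  then show ?thesis
    by blast
qed

lemma regular_1_length:
  assumes "regular 1 w"
  shows "4 dvd length w"
proof -
  define m where "m = pos_power_sum 0 B w"
  have n: "length w = 2 * m" and "4 * pos_power_sum 1 B w = length w * (length w + 1)"
    using assms unfolding regular_1_iff_B_sums m_def by simp_all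
  then have "m * (2 * m + 1) = 2 * pos_power_sum 1 B w"
    by simp
  then have "even (m * (2 * m + 1))"
    by simp
  then have "even m"
    by simp
  with n show ?thesis
    by auto
qed

lemma regular_1_replicate_A_B:
  assumes "regular 1 (replicate a A @ replicate b B)" (is "regular 1 ?w")
  shows "a = 0 \<and> b = 0"
proof -
  have "pos_power_sum 0 B ?w = b" and "pos_power_sum 1 B ?w = pos_power_sum 1 B (replicate b B) + a * b"
    by (simp_all add: pos_power_sum_append_0 pos_power_sum_append_1 pos_power_sum_0_replicate
        pos_power_sum_replicate_other del: One_nat_def)
  moreover have "2 * pos_power_sum 0 B ?w = length ?w"
    and "4 * pos_power_sum 1 B ?w = length ?w * (length ?w + 1)"
    using assms unfolding regular_1_iff_B_sums by blast+
  moreover have "2 * pos_power_sum 1 B (replicate b B) = b * (b + 1)"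
    by (rule double_pos_power_sum_1_replicate)
  ultimately have "a = b" and "b * b = 0"
    by (simp_all add: algebra_simps del: mult_is_0 mult_eq_0_iff)
  then show ?thesis
    by simp
qed

lemma regular_1_one_inversion:
  assumes "regular 1 (replicate a A @ replicate b B @ A # replicate c B @ replicate d A)"
    (is "regular 1 ?w")
    and "0 < b"
  shows "c = 0 \<and> b = 2 * a \<and> Suc d = a"
proof -
  define P where "P = pos_power_sum 1 B (replicate b B)"
  define Q where "Q = pos_power_sum 1 B (replicate c B)"
  have count: "pos_power_sum 0 B ?w = b + c"
    and moment: "pos_power_sum 1 B ?w = P + a * b + Q + (a + b + 1) * c"
    unfolding P_def Q_def
    by (simp_all add: pos_power_sum_append_0 pos_power_sum_append_1 pos_power_sum_0_replicate
        pos_power_sum_replicate_other pos_power_sum_Cons_0_1_2 algebra_simps del: One_nat_def)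
  have "2 * pos_power_sum 0 B ?w = length ?w"
    and moment_eq: "4 * pos_power_sum 1 B ?w = length ?w * (length ?w + 1)"
    using assms(1) unfolding regular_1_iff_B_sums by blast+
  then have n: "length ?w = 2 * (b + c)"
    unfolding count by simp
  then have len: "2 * (b + c) = a + b + 1 + c + d"
    by simp
  have "4 * (P + a * b + Q + (a + b + 1) * c) = 2 * (b + c) * (2 * (b + c) + 1)"
    using moment_eq unfolding moment n .
  moreover have "2 * P = b * (b + 1)" and "2 * Q = c * (c + 1)"
    unfolding P_def Q_def by (rule double_pos_power_sum_1_replicate)+
  ultimately have "(b + c) * (b + c) = 2 * a * (b + c) + 2 * c"
    by (simp add: algebra_simps)
  then obtain m where m: "m = b + c" and key: "m * m = 2 * a * m + 2 * c"
    by blast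
  \<comment> \<open>As \<open>c < m\<close>, this squeezes \<open>m\<close> between \<open>2 a\<close> and \<open>2 a + 1\<close>; parity excludes \<open>2 a + 1\<close>.\<close>
  have "c < m"
    using m assms(2) by simp
  then have "m * m < (2 * a + 2) * m"
    using key by (simp add: algebra_simps)
  then have "m < 2 * a + 2"
    by (simp only: mult_less_cancel2)
  moreover have "2 * a * m \<le> m * m"
    using key by simp
  then have "2 * a \<le> m"
    using \<open>c < m\<close> by simp
  ultimately consider "m = 2 * a" | "m = 2 * a + 1"
    by linarith
  then have "m = 2 * a"
  proof cases
    case 2
    with key have "2 * a + 1 = 2 * c"
      by (simp add: algebra_simps)
    then show ?thesis
      by presburger
  qed
  with key have "c = 0"
    by simp
  with \<open>m = 2 * a\<close> m len show ?thesis
    by simp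
qed

abbreviation sandwich_word :: "nat \<Rightarrow> letter list" where
  "sandwich_word k \<equiv> replicate k A @ replicate (2 * k) B @ replicate k A"

lemma regular_1_sandwich_word: "regular 1 (sandwich_word k)"
proof -
  have "pos_power_sum 0 B (sandwich_word k) = 2 * k"
    and "pos_power_sum 1 B (sandwich_word k) = pos_power_sum 1 B (replicate (2 * k) B) + k * (2 * k)"
    by (simp_all add: pos_power_sum_append_0 pos_power_sum_append_1 pos_power_sum_0_replicate
        pos_power_sum_replicate_other del: One_nat_def)
  moreover have "2 * pos_power_sum 1 B (replicate (2 * k) B) = 2 * k * (2 * k + 1)"
    by (rule double_pos_power_sum_1_replicate)
  ultimately show ?thesis
    unfolding regular_1_iff_B_sums by (simp add: algebra_simps)
qed

lemma regular_1_has_BA_AB_pattern: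
  assumes "regular 1 w" and "\<not> (\<exists>k. w = sandwich_word k)"
  shows "\<exists>x y z. w = x @ [B, A] @ y @ [A, B] @ z"
proof (rule ccontr)
  assume "\<not> (\<exists>x y z. w = x @ [B, A] @ y @ [A, B] @ z)"
  then consider a b where "w = replicate a A @ replicate b B"
    | a b c d where "w = replicate a A @ replicate (Suc b) B @ A # replicate c B @ replicate d A"
    using word_without_BA_AB_pattern by blast
  then show False
  proof cases
    case (1 a b)
    with assms have "w = sandwich_word 0"
      using regular_1_replicate_A_B by simp
    with assms(2) show False
      by blast
  next
    case (2 a b c d)
    with assms(1) have "c = 0" "Suc b = 2 * a" "Suc d = a"
      using regular_1_one_inversion[of a "Suc b" c d] by simp_all
    with 2 have "w = sandwich_word a"
      by (simp flip: replicate_Suc)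
    with assms(2) show False
      by blast
  qed
qed

lemma regular_swap_steps_from_sandwich_word:
  assumes "regular 1 w" and "length w = 4 * k"
  shows "regular_swap_step\<^sup>*\<^sup>* (sandwich_word k) w"
  using assms
proof (induction w rule: measure_induct_rule[where f = "pos_power_sum 2 B"])
  \<comment> \<open>Undoing a swap step decreases \<open>pos_power_sum 2 B\<close>.\<close>
  case (less w)
  show ?case
  proof (cases "\<exists>k'. w = sandwich_word k'")
    case True
    with less.prems(2) have "w = sandwich_word k"
      by auto
    then show ?thesis
      by simp
  next
    case False
    with less.prems(1) obtain x y z where w: "w = x @ [B, A] @ y @ [A, B] @ z"
      using regular_1_has_BA_AB_pattern by blast
    define w' where "w' = x @ [A, B] @ y @ [B, A] @ z"
    have step: "swap_step w' w"
      unfolding swap_step_def w w'_def by blast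
    then have "regular 1 w'"
      using less.prems(1) swap_step_regular_1_iff by blast
    moreover have "length w' = 4 * k"
      using less.prems(2) unfolding w w'_def by simp
    ultimately have "regular_swap_step\<^sup>*\<^sup>* (sandwich_word k) w'"
      using less.IH swap_step_pos_power_sum_2_B_less[OF step] by blast
    moreover have "regular_swap_step w' w"
      unfolding regular_swap_step_def using step \<open>regular 1 w'\<close> less.prems(1) by blast
    ultimately show ?thesis
      by (rule rtranclp.rtrancl_into_rtrancl)
  qed
qed

theorem mainTheorem7:
  shows "(\<forall>n::nat. n \<ge> 1 \<longrightarrow>
            ((\<exists>w. length w = n \<and> regular 1 w) \<longleftrightarrow> (\<exists>k::nat. k > 0 \<and> n = 4 * k)))
       \<and> (\<forall>k::nat. k > 0 \<longrightarrow> (\<forall>w. length w = 4 * k \<and> regular 1 w \<longrightarrow>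
            regular_swap_step\<^sup>*\<^sup>*
              (replicate k A @ replicate (2 * k) B @ replicate k A) w))"
proof (intro conjI allI impI iffI)
  fix n :: nat
  assume "n \<ge> 1" and "\<exists>w. length w = n \<and> regular 1 w"
  then show "\<exists>k. k > 0 \<and> n = 4 * k"
    using regular_1_length by fastforce
next
  fix n :: nat
  assume "\<exists>k. k > 0 \<and> n = 4 * k"
  then obtain k where "n = 4 * k"
    by blast
  then have "length (sandwich_word k) = n"
    by simp
  then show "\<exists>w. length w = n \<and> regular 1 w"
    using regular_1_sandwich_word by blast
qed (use regular_swap_steps_from_sandwich_word in blast)

end
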